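(* Let $d\ge2$ and $p=(\sqrt d+1)^{-1}$, and consider $\mathcal{C}_{\mathrm{PP}},\mathcal{C}_{\mathrm{s}}$ with this $p$ and $\mathcal{C}_{\mathrm{q}}$ (all with variance constant $\omega=\sqrt d$). For a symmetric positive definite $M$ and a random vector $E$ with $\mathbb{E}[EE^\top]=M$ independent of the compression randomness, let $\mathfrak{C}(\mathcal{C},M):=\mathbb{E}[\mathcal{C}(E)\mathcal{C}(E)^\top]$ for $\mathcal{C}\in\{\mathcal{C}_{\mathrm{PP}},\mathcal{C}_{\mathrm{s}}\}$, and $\widetilde{\mathfrak{C}}(\mathcal{C}_{\mathrm{q}},M):=M+\sqrt{\mathrm{Tr}(M)}\sqrt{\mathrm{Diag}(M)}-\mathrm{Diag}(M)$. (1) If $M$ is diagonal: $\mathrm{Tr}(\mathfrak{C}(\mathcal{C}_{\mathrm{PP}},M)M^{-1})=\mathrm{Tr}(\mathfrak{C}(\mathcal{C}_{\mathrm{s}},M)M^{-1})\le(1+\frac1{\sqrt d})\mathrm{Tr}(\widetilde{\mathfrak{C}}(\mathcal{C}_{\mathrm{q}},M)M^{-1})$. (2) If $M$ has constant diagonal: $\widetilde{\mathfrak{C}}(\mathcal{C}_{\mathrm{q}},M)\preccurlyeq\mathfrak{C}(\mathcal{C}_{\mathrm{s}},M)$ and $\mathrm{Tr}(\mathfrak{C}(\mathcal{C}_{\mathrm{PP}},M)M^{-1})\le(1+\frac1{\sqrt d})\mathrm{Tr}(\widetilde{\mathfrak{C}}(\mathcal{C}_{\mathrm{q}},M)M^{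-1})$.
   Context: $\mathcal{C}_{\mathrm{q}}(z)=\|z\|\mathrm{sign}(z)\odot\chi$ with $\chi_i\sim\mathrm{Bern}(|z_i|/\|z\|)$ independent; $\mathcal{C}_{\mathrm{s}}(z)=\frac1pB\odot z$, $B_i$ i.i.d. $\mathrm{Bern}(p)$; $\mathcal{C}_{\mathrm{PP}}(z)=\frac{b_0}pz$, $b_0\sim\mathrm{Bern}(p)$. $\mathrm{Diag}(M)$ is the diagonal part of $M$ and its square root is entrywise. ($\widetilde{\mathfrak{C}}(\mathcal{C}_{\mathrm{q}},M)$ is an upper bound on the covariance of $\mathcal{C}_{\mathrm{q}}(E)$.) *)

theory Defs
  imports "HOL-Analysis.Analysis" "HOL-Probability.Probability"
begin

definition C_PP :: "real \<Rightarrow> real^'n \<Rightarrow> (real^'n) pmf" where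
  "C_PP p z = map_pmf (\<lambda>b. (if b then 1 / p else 0) *\<^sub>R z) (bernoulli_pmf p)"

definition C_s :: "real \<Rightarrow> real^'n::finite \<Rightarrow> (real^'n) pmf" where
  "C_s p z = map_pmf (\<lambda>B. \<chi> i. (if B i then 1 / p else 0) * z $ i)
                     (Pi_pmf UNIV False (\<lambda>_. bernoulli_pmf p))"

text \<open>Second-moment matrix of the compressed random vector C(E), where E ~ mu is
  independent of the compressor randomness.\<close>
definition frakC :: "(real^'n \<Rightarrow> (real^'n) pmf) \<Rightarrow> (real^'n) measure \<Rightarrow> real^'n^'n" where
  "frakC C mu = (\<chi> i j. \<integral>z. measure_pmf.expectation (C z) (\<lambda>c. c $ i * c $ j) \<partial>mu)"

definition Diag :: "real^'n^'n \<Rightarrow> real^'n^'n" where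
  "Diag M = (\<chi> i j. if i = j then M $ i $ j else 0)"

definition sqrt_entry :: "real^'n^'n \<Rightarrow> real^'n^'n" where
  "sqrt_entry M = (\<chi> i j. sqrt (M $ i $ j))"

definition frakC_q_tilde :: "real^'n^'n \<Rightarrow> real^'n^'n" where
  "frakC_q_tilde M = M + sqrt (trace M) *\<^sub>R sqrt_entry (Diag M) - Diag M"

definition sym_pos_def :: "real^'n^'n \<Rightarrow> bool" where
  "sym_pos_def M \<longleftrightarrow> transpose M = M \<and> (\<forall>x. x \<noteq> 0 \<longrightarrow> x \<bullet> (M *v x) > 0)"

definition loewner_le :: "real^'n^'n \<Rightarrow> real^'n^'n \<Rightarrow> bool" where
  "loewner_le A B \<longleftrightarrow> (\<forall>x. x \<bullet> ((B - A) *v x) \<ge> 0)"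

end

theory Submission
  imports Defs
begin

(* Write s = sqrt d, so that 1/p = s + 1. The second moment of C_PP is (s + 1) M and that of C_s is
   M + s Diag M; they coincide for diagonal M, and tr(C_PP M^-1) = (s + 1) d in general.
   For the quantization bound, C~_q = M + D with D diagonal and D_ii = sqrt(tr M) sqrt(M_ii) - M_ii >= 0,
   while (M^-1)_ii >= 1/M_ii (Cauchy-Schwarz for the form of M). Hence
   tr(C~_q M^-1) >= d + sum_i D_ii / M_ii = sqrt(tr M) sum_i M_ii^(-1/2) >= d^(3/2) = d s
   by the power-mean inequality, and (s + 1) d = (1 + 1/s) d s gives the trace bound for every
   positive definite M. With constant diagonal c, finally, C_s = C~_q + c I. *)

lemma expectation_C_PP_mult:
  assumes "0 < p" "p \<le> 1"
  shows "measure_pmf.expectation (C_PP p z) (\<lambda>c. c $ i * c $ j) = z $ i * z $ j / p"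
  using assms by (simp add: C_PP_def field_simps power2_eq_square)

lemma expectation_prod_Pi_pmf_subset:
  fixes f :: "'a \<Rightarrow> 'b \<Rightarrow> real"
  assumes "finite A" "J \<subseteq> A"
    and "\<And>x. x \<in> J \<Longrightarrow> integrable (measure_pmf (p x)) (f x)"
    and "\<And>x y. x \<in> J \<Longrightarrow> y \<in> set_pmf (p x) \<Longrightarrow> f x y \<ge> 0"
  shows "measure_pmf.expectation (Pi_pmf A dflt p) (\<lambda>y. \<Prod>x\<in>J. f x (y x)) =
           (\<Prod>x\<in>J. measure_pmf.expectation (p x) (f x))"
proof -
  have "finite J" using assms(1,2) finite_subset by blast
  have "measure_pmf.expectation (Pi_pmf A dflt p) (\<lambda>y. \<Prod>x\<in>J. f x (y x)) =
        measure_pmf.expectation (Pi_pmf J dflt p) (\<lambda>y. \<Prod>x\<in>J. f x (y x))"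
    by (simp add: Pi_pmf_subset[OF assms(1,2)] cong: prod.cong)
  also have "\<dots> = (\<Prod>x\<in>J. measure_pmf.expectation (p x) (f x))"
    using \<open>finite J\<close> assms(3,4) by (rule expectation_prod_Pi_pmf)
  finally show ?thesis .
qed

lemma expectation_C_s_mult:
  fixes z :: "real^'n::finite"
  assumes "0 < p" "p \<le> 1"
  shows "measure_pmf.expectation (C_s p z) (\<lambda>c. c $ i * c $ j) =
           (if i = j then z $ i * z $ j / p else z $ i * z $ j)"
proof -
  define g where "g = (\<lambda>b::bool. if b then 1 / p else 0)"
  define P where "P = Pi_pmf (UNIV::'n set) False (\<lambda>_. bernoulli_pmf p)"
  have C_s_mult: "measure_pmf.expectation (C_s p z) (\<lambda>c. c $ i * c $ j) =
      z $ i * z $ j * measure_pmf.expectation P (\<lambda>B. g (B i) * g (B j))"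
    by (simp add: C_s_def P_def g_def algebra_simps)
  show ?thesis
  proof (cases "i = j")
    case True
    have "map_pmf (\<lambda>B. B i) P = bernoulli_pmf p"
      unfolding P_def by (subst Pi_pmf_component) auto
    have "measure_pmf.expectation P (\<lambda>B. g (B i) * g (B i)) =
          measure_pmf.expectation (map_pmf (\<lambda>B. B i) P) (\<lambda>b. g b * g b)"
      by simp
    also have "\<dots> = 1 / p"
      using assms by (simp add: \<open>map_pmf (\<lambda>B. B i) P = bernoulli_pmf p\<close> g_def)
    finally have "measure_pmf.expectation P (\<lambda>B. g (B i) * g (B i)) = 1 / p" .
    then show ?thesis using True C_s_mult by simp
  next
    case False
    have "measure_pmf.expectation P (\<lambda>B. \<Prod>k\<in>{i, j}. g (B k)) =
          (\<Prod>k\<in>{i, j}. measure_pmf.expectation (bernoulli_pmf p) g)"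
      unfolding P_def
      by (rule expectation_prod_Pi_pmf_subset) (use assms in \<open>auto simp: g_def integrable_measure_pmf_finite\<close>)
    then show ?thesis using False assms C_s_mult by (simp add: g_def)
  qed
qed

lemma frakC_C_PP:
  assumes "0 < p" "p \<le> 1" and "\<And>i j. M $ i $ j = (\<integral>z. z $ i * z $ j \<partial>mu)"
  shows "frakC (C_PP p) mu = (1 / p) *\<^sub>R M"
  using assms by (simp add: vec_eq_iff frakC_def expectation_C_PP_mult)

lemma frakC_C_s:
  assumes "0 < p" "p \<le> 1" and "\<And>i j. M $ i $ j = (\<integral>z. z $ i * z $ j \<partial>mu)"
  shows "frakC (C_s p) mu = M + (1 / p - 1) *\<^sub>R Diag M"
  using assms by (simp add: vec_eq_iff frakC_def expectation_C_s_mult Diag_def algebra_simps)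

lemma Diag_eq_self:
  assumes "\<And>i j. i \<noteq> j \<Longrightarrow> M $ i $ j = 0"
  shows "Diag M = M"
  using assms by (simp add: vec_eq_iff Diag_def)

lemma matrix_add_rdistrib: "(A + B) ** C = A ** C + B ** C"
  by (vector matrix_matrix_mult_def sum.distrib[symmetric] field_simps)

lemma trace_Diag_mult: "trace (Diag A ** B) = (\<Sum>i\<in>UNIV. A $ i $ i * B $ i $ i)"
  by (simp add: trace_def matrix_matrix_mult_def Diag_def if_distrib[of "\<lambda>x. x * _"] cong: if_cong)

lemma frakC_q_tilde_eq_plus_Diag:
  "frakC_q_tilde M = M + Diag (sqrt (trace M) *\<^sub>R sqrt_entry M - M)"
  by (simp add: vec_eq_iff frakC_q_tilde_def Diag_def sqrt_entry_def)

lemma matrix_inv_right: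
  assumes "invertible A"
  shows "A ** matrix_inv A = mat 1"
  using assms unfolding invertible_def matrix_inv_def by (rule someI_ex[THEN conjunct1])

lemma sym_pos_def_diag_pos:
  assumes "sym_pos_def M"
  shows "0 < M $ i $ i"
proof -
  have "axis i 1 \<bullet> (M *v axis i 1) = M $ i $ i"
    by (simp add: matrix_vector_mult_basis inner_axis' column_def)
  then show ?thesis
    using assms by (metis axis_eq_0_iff sym_pos_def_def zero_neq_one)
qed

lemma sym_pos_def_invertible:
  assumes "sym_pos_def M"
  shows "invertible M"
  unfolding invertible_left_inverse matrix_left_invertible_ker
  using assms by (metis inner_zero_right less_irrefl sym_pos_def_def)

lemma sym_pos_def_matrix_inv_diag_ge:
  fixes M :: "real^'n^'n"
  assumes "sym_pos_def M"
  shows "1 / M $ i $ i \<le> matrix_inv M $ i $ i"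
proof -
  have symM: "transpose M = M" and posM: "\<And>x. x \<noteq> 0 \<Longrightarrow> 0 < x \<bullet> (M *v x)"
    using assms by (auto simp: sym_pos_def_def)
  define c where "c = M $ i $ i"
  have "0 < c" unfolding c_def using assms by (rule sym_pos_def_diag_pos)
  define u :: "real^'n" where "u = axis i 1"
  define v where "v = matrix_inv M *v u"
  have Mv: "M *v v = u"
    using matrix_inv_right[OF sym_pos_def_invertible[OF assms]]
    by (simp add: v_def matrix_vector_mul_assoc)
  have uMu: "u \<bullet> (M *v u) = c"
    by (simp add: u_def c_def matrix_vector_mult_basis inner_axis' column_def)
  have vu: "v \<bullet> u = matrix_inv M $ i $ i"
    by (simp add: v_def u_def inner_axis matrix_vector_mult_basis column_def)
  have uu: "u \<bullet> u = 1" by (simp add: u_def)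
  have vMu: "v \<bullet> (M *v u) = 1"
    by (metis symM Mv uu dot_lmul_matrix vector_transpose_matrix)
  \<comment> \<open>Cauchy-Schwarz for the form of M, as positivity at the minimiser v - u/c\<close>
  define x where "x = v - (1 / c) *\<^sub>R u"
  have "0 \<le> x \<bullet> (M *v x)"
    using posM[of x] by (cases "x = 0") auto
  also have "x \<bullet> (M *v x) = matrix_inv M $ i $ i - 1 / c"
    using \<open>0 < c\<close>
    by (simp add: x_def matrix_vector_mult_diff_distrib matrix_vector_mult_scaleR
        inner_diff_left inner_diff_right Mv vu uu uMu vMu inner_commute[of u v] field_simps)
  finally show ?thesis by (simp add: c_def)
qed

lemma trace_frakC_C_PP_matrix_inv:
  fixes M :: "real^'n^'n"
  assumes "0 < p" "p \<le> 1" and "\<And>i j. M $ i $ j = (\<integral>z. z $ i * z $ j \<partial>mu)"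
    and "sym_pos_def M"
  shows "trace (frakC (C_PP p) mu ** matrix_inv M) = CARD('n) / p"
proof -
  have "frakC (C_PP p) mu ** matrix_inv M = (1 / p) *\<^sub>R mat 1"
    unfolding frakC_C_PP[OF assms(1-3)] scalar_matrix_assoc[symmetric]
    using matrix_inv_right[OF sym_pos_def_invertible[OF assms(4)]] by simp
  then show ?thesis by (simp add: trace_def mat_def)
qed

lemma card_mult_sqrt_card_le_sum_inverse_sqrt:
  fixes a :: "'a \<Rightarrow> real"
  assumes "finite A" "A \<noteq> {}" and pos: "\<And>i. i \<in> A \<Longrightarrow> 0 < a i"
  shows "card A * sqrt (card A) \<le> sqrt (sum a A) * (\<Sum>i\<in>A. 1 / sqrt (a i))"
proof -
  define d where "d = real (card A)"
  define T where "T = sum a A"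
  have "0 < d" using assms(1,2) by (simp add: d_def card_gt_0_iff)
  have "0 < T" using assms unfolding T_def by (intro sum_pos) auto
  define r where "r = sqrt (T / d)"
  have "0 < r" using \<open>0 < d\<close> \<open>0 < T\<close> by (simp add: r_def)
  \<comment> \<open>convexity of t \<mapsto> t powr (-1/2): its tangent at r^2, evaluated at x^2\<close>
  have tangent: "3 / (2 * r) - x\<^sup>2 / (2 * r ^ 3) \<le> 1 / x" if "0 < x" for x
  proof -
    have "0 \<le> (x - r)\<^sup>2 * (x + 2 * r)" using that \<open>0 < r\<close> by simp
    then have "3 * r\<^sup>2 * x - x ^ 3 \<le> 2 * r ^ 3"
      by (simp add: algebra_simps power2_eq_square power3_eq_cube)
    then show ?thesis
      using that \<open>0 < r\<close> by (simp add: field_simps power2_eq_square power3_eq_cube)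
  qed
  have "d / r = (\<Sum>i\<in>A. 3 / (2 * r) - (sqrt (a i))\<^sup>2 / (2 * r ^ 3))"
  proof -
    have "r\<^sup>2 = T / d" using \<open>0 < d\<close> \<open>0 < T\<close> by (simp add: r_def)
    then have "T / (2 * r ^ 3) = d / (2 * r)"
      using \<open>0 < r\<close> \<open>0 < d\<close> by (simp add: field_simps power2_eq_square power3_eq_cube)
    then show ?thesis
      using pos by (simp add: sum_subtractf d_def T_def sum_divide_distrib[symmetric] less_imp_le)
  qed
  also have "\<dots> \<le> (\<Sum>i\<in>A. 1 / sqrt (a i))"
    using pos by (intro sum_mono tangent) auto
  finally have "sqrt T * (d / r) \<le> sqrt T * (\<Sum>i\<in>A. 1 / sqrt (a i))"
    using \<open>0 < T\<close> by (intro mult_left_mono) auto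
  moreover have "sqrt T * (d / r) = d * sqrt d"
    using \<open>0 < d\<close> \<open>0 < T\<close> by (simp add: r_def real_sqrt_divide field_simps)
  ultimately show ?thesis by (simp add: d_def T_def)
qed

lemma trace_frakC_q_tilde_matrix_inv_ge:
  fixes M :: "real^'n^'n"
  assumes "sym_pos_def M"
  shows "CARD('n) * sqrt CARD('n) \<le> trace (frakC_q_tilde M ** matrix_inv M)"
proof -
  define T where "T = trace M"
  have pos: "0 < M $ i $ i" for i
    using assms by (rule sym_pos_def_diag_pos)
  have T_sum: "T = (\<Sum>i\<in>UNIV. M $ i $ i)" by (simp add: T_def trace_def)
  then have "CARD('n) * sqrt CARD('n) \<le> sqrt T * (\<Sum>i\<in>UNIV. 1 / sqrt (M $ i $ i))"
    using card_mult_sqrt_card_le_sum_inverse_sqrt[of UNIV "\<lambda>i. M $ i $ i"] pos by simp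
  also have "\<dots> = (\<Sum>i\<in>UNIV. 1 + (sqrt T * sqrt (M $ i $ i) - M $ i $ i) * (1 / M $ i $ i))"
  proof -
    have "sqrt T * (1 / sqrt (M $ i $ i)) = 1 + (sqrt T * sqrt (M $ i $ i) - M $ i $ i) * (1 / M $ i $ i)" for i
      using pos[of i] by (simp add: field_simps)
    then show ?thesis by (simp add: sum_distrib_left)
  qed
  also have "\<dots> \<le> (\<Sum>i\<in>UNIV. 1 + (sqrt T * sqrt (M $ i $ i) - M $ i $ i) * matrix_inv M $ i $ i)"
  proof (intro sum_mono add_left_mono mult_left_mono)
    fix i
    show "1 / M $ i $ i \<le> matrix_inv M $ i $ i"
      using assms by (rule sym_pos_def_matrix_inv_diag_ge)
    have "M $ i $ i \<le> T"
      using pos unfolding T_sum by (intro member_le_sum) (auto intro: less_imp_le)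
    then have "sqrt (M $ i $ i) * sqrt (M $ i $ i) \<le> sqrt T * sqrt (M $ i $ i)"
      using pos[of i] by (intro mult_right_mono real_sqrt_le_mono) auto
    then show "0 \<le> sqrt T * sqrt (M $ i $ i) - M $ i $ i"
      using pos[of i] by simp
  qed
  also have "\<dots> = trace (frakC_q_tilde M ** matrix_inv M)"
    using matrix_inv_right[OF sym_pos_def_invertible[OF assms]]
    by (simp add: frakC_q_tilde_eq_plus_Diag matrix_add_rdistrib trace_add trace_Diag_mult trace_I
        sqrt_entry_def T_def sum.distrib)
  finally show ?thesis .
qed

lemma frakC_C_s_eq_frakC_q_tilde_add:
  fixes M :: "real^'n^'n"
  assumes "0 < p" "p \<le> 1" "1 / p = sqrt CARD('n) + 1"
    and "\<And>i j. M $ i $ j = (\<integral>z. z $ i * z $ j \<partial>mu)"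
    and const: "\<And>i. M $ i $ i = c" and "0 \<le> c"
  shows "frakC (C_s p) mu = frakC_q_tilde M + c *\<^sub>R mat 1"
proof -
  have "trace M = CARD('n) * c" by (simp add: trace_def const)
  then have "sqrt (trace M) * sqrt c = sqrt CARD('n) * c"
    using \<open>0 \<le> c\<close> by (simp add: real_sqrt_mult)
  then show ?thesis
    using assms(3)
    by (simp add: frakC_C_s[OF assms(1,2,4)] vec_eq_iff frakC_q_tilde_def Diag_def sqrt_entry_def
        mat_def const)
qed

lemma loewner_le_add_scaleR_mat:
  fixes A :: "real^'n^'n"
  assumes "0 \<le> c"
  shows "loewner_le A (A + c *\<^sub>R mat 1)"
  using assms by (simp add: loewner_le_def scaleR_matrix_vector_assoc[symmetric])

theorem proposition4:
  fixes M :: "real^'n^'n" and mu :: "(real^'n) measure" and p :: real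
  assumes d2: "CARD('n) \<ge> 2"
    and p_def: "p = 1 / (sqrt (real CARD('n)) + 1)"
    and M_spd: "sym_pos_def M"
    and mu_prob: "prob_space mu"
    and mu_sets: "sets mu = sets borel"
    and sq_int: "\<And>i. integrable mu (\<lambda>z. (z $ i)\<^sup>2)"
    and M_moment: "\<And>i j. M $ i $ j = (\<integral>z. z $ i * z $ j \<partial>mu)"
  shows
    "((\<forall>i j. i \<noteq> j \<longrightarrow> M $ i $ j = 0) \<longrightarrow>
        trace (frakC (C_PP p) mu ** matrix_inv M) = trace (frakC (C_s p) mu ** matrix_inv M) \<and>
        trace (frakC (C_s p) mu ** matrix_inv M)
          \<le> (1 + 1 / sqrt (real CARD('n))) * trace (frakC_q_tilde M ** matrix_inv M))
     \<and>
     ((\<exists>c. \<forall>i. M $ i $ i = c) \<longrightarrow>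
        loewner_le (frakC_q_tilde M) (frakC (C_s p) mu) \<and>
        trace (frakC (C_PP p) mu ** matrix_inv M)
          \<le> (1 + 1 / sqrt (real CARD('n))) * trace (frakC_q_tilde M ** matrix_inv M))"
proof -
  \<comment> \<open>mu_prob, mu_sets and sq_int go unused: every entry of frakC integrates a constant multiple of z_i z_j\<close>
  define s where "s = sqrt CARD('n)"
  have "1 \<le> s" using d2 by (simp add: s_def)
  have "p = 1 / (s + 1)" by (simp add: p_def s_def)
  with \<open>1 \<le> s\<close> have p: "0 < p" "p \<le> 1" "1 / p = s + 1"
    by simp_all
  have "trace (frakC (C_PP p) mu ** matrix_inv M) = CARD('n) * (1 / p)"
    using trace_frakC_C_PP_matrix_inv[OF p(1,2) M_moment M_spd] by simp
  also have "\<dots> = (1 + 1 / s) * (CARD('n) * s)"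
    unfolding p(3) using \<open>1 \<le> s\<close> by (simp add: field_simps)
  also have "\<dots> \<le> (1 + 1 / s) * trace (frakC_q_tilde M ** matrix_inv M)"
    using trace_frakC_q_tilde_matrix_inv_ge[OF M_spd] \<open>1 \<le> s\<close>
    by (intro mult_left_mono) (auto simp: s_def)
  finally have PP_le: "trace (frakC (C_PP p) mu ** matrix_inv M)
      \<le> (1 + 1 / s) * trace (frakC_q_tilde M ** matrix_inv M)" .
  have "frakC (C_s p) mu = frakC (C_PP p) mu" if "\<forall>i j. i \<noteq> j \<longrightarrow> M $ i $ j = 0"
    using that p
    by (simp add: frakC_C_s[OF p(1,2) M_moment] frakC_C_PP[OF p(1,2) M_moment] Diag_eq_self
        algebra_simps)
  moreover have "loewner_le (frakC_q_tilde M) (frakC (C_s p) mu)" if const: "\<forall>i. M $ i $ i = c" for c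
  proof -
    have "0 \<le> c" using sym_pos_def_diag_pos[OF M_spd] const by (metis less_imp_le)
    then have "frakC (C_s p) mu = frakC_q_tilde M + c *\<^sub>R mat 1"
      using p M_moment const by (intro frakC_C_s_eq_frakC_q_tilde_add) (auto simp: s_def)
    with \<open>0 \<le> c\<close> show ?thesis by (simp add: loewner_le_add_scaleR_mat)
  qed
  ultimately show ?thesis
    using PP_le by (auto simp: s_def)
qed

end
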